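(* Let $p_j>0$, $q_{j+1}>0$, $r_j\ge 0$ ($j\ge 0$) be the one-step transition probabilities of a random walk on $\mathcal{N}=\{0,1,2,\dots\}$ (up-step $p_j$, holding $r_j$, down-step $q_j$ from state $j$), with $q_0:=0$ and $p_j+q_j+r_j=1$ for all $j\ge0$. Let $\pi_0:=1$, $\pi_n:=\frac{p_0\cdots p_{n-1}}{q_1\cdots q_n}$ ($n\ge1$), and define polynomials $Q_n$ by $Q_0(x)=1$, $p_0Q_1(x)=x-r_0$, and $xQ_n(x)=q_nQ_{n-1}(x)+r_nQ_n(x)+p_nQ_{n+1}(x)$ for $n\ge 1$. Let $\psi$ be the unique Borel probability measure on $[-1,1]$ with infinite support with respect to which the $Q_n$ are orthogonal, and $\eta:=\sup\operatorname{supp}(\psi)$. For $\theta\ge\eta$ and $j\ge 0$ define \[p_j(\theta):=\frac{Q_{j+1}(\theta)}{Q_j(\theta)}\frac{p_j}{\theta},\quad r_j(\theta):=\frac{r_j}{\theta},\quad \pi_j(\theta):=\pi_jQ_j^2(\theta),\] and for $n\ge0$ \[M_n(\theta):=\sum_{j=0}^n\frac{1}{p_j(\theta)\pi_j(\theta)}\sum_{k=0}^j r_k(\theta)\pi_k(\theta).\] If $\eta\le\theta_1\le\theta_2$, then $M_n(\theta_1)\ge M_n(\theta_2)$ for all $n\ge 0$.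
   Context: It is known that $\eta>0$ and that $Q_n(x)>0$ for all $n\ge0$ whenever $x\ge\eta$, so the quantities above are well defined and positive. *)

theory Defs
  imports "HOL-Probability.Probability"
begin

fun Qpol :: "(nat \<Rightarrow> real) \<Rightarrow> (nat \<Rightarrow> real) \<Rightarrow> (nat \<Rightarrow> real) \<Rightarrow> nat \<Rightarrow> real \<Rightarrow> real" where
  "Qpol p q r 0 x = 1"
| "Qpol p q r (Suc 0) x = (x - r 0) / p 0"
| "Qpol p q r (Suc (Suc n)) x =
     ((x - r (Suc n)) * Qpol p q r (Suc n) x - q (Suc n) * Qpol p q r n x) / p (Suc n)"

definition pis :: "(nat \<Rightarrow> real) \<Rightarrow> (nat \<Rightarrow> real) \<Rightarrow> nat \<Rightarrow> real" where
  "pis p q n = (\<Prod>i<n. p i) / (\<Prod>i<n. q (Suc i))"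

definition msupport :: "real measure \<Rightarrow> real set" where
  "msupport M = {x. \<forall>e>0. emeasure M (ball x e) > 0}"

definition ptheta :: "(nat \<Rightarrow> real) \<Rightarrow> (nat \<Rightarrow> real) \<Rightarrow> (nat \<Rightarrow> real) \<Rightarrow> nat \<Rightarrow> real \<Rightarrow> real" where
  "ptheta p q r j \<theta> = Qpol p q r (Suc j) \<theta> / Qpol p q r j \<theta> * (p j / \<theta>)"

definition rtheta :: "(nat \<Rightarrow> real) \<Rightarrow> nat \<Rightarrow> real \<Rightarrow> real" where
  "rtheta r j \<theta> = r j / \<theta>"

definition pitheta :: "(nat \<Rightarrow> real) \<Rightarrow> (nat \<Rightarrow> real) \<Rightarrow> (nat \<Rightarrow> real) \<Rightarrow> nat \<Rightarrow> real \<Rightarrow> real" where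
  "pitheta p q r j \<theta> = pis p q j * (Qpol p q r j \<theta>)\<^sup>2"

definition Mfun :: "(nat \<Rightarrow> real) \<Rightarrow> (nat \<Rightarrow> real) \<Rightarrow> (nat \<Rightarrow> real) \<Rightarrow> nat \<Rightarrow> real \<Rightarrow> real" where
  "Mfun p q r n \<theta> = (\<Sum>j\<le>n. 1 / (ptheta p q r j \<theta> * pitheta p q r j \<theta>) *
       (\<Sum>k\<le>j. rtheta r k \<theta> * pitheta p q r k \<theta>))"

end

theory Submission
  imports Defs
begin

text \<open>After cancelling \<theta>, the (j,k) summand of M_n(\<theta>) is a nonnegative constant times
  (Q_k/Q_j)^2 (Q_j/Q_{j+1}). Where all Q_n are positive, the three-term recurrence makes
  Q_{n+1}/Q_n increasing in x, so every quotient Q_k/Q_m with k \<le> m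
  is decreasing in x, and so is each summand.\<close>

lemma Qpol_ratio_mono:
  fixes p q r :: "nat \<Rightarrow> real"
  assumes p_pos: "\<And>j. p j > 0" and q_nonneg: "\<And>j. q (Suc j) \<ge> 0"
    and Qx_pos: "\<And>n. Qpol p q r n x > 0" and Qy_pos: "\<And>n. Qpol p q r n y > 0"
    and "x \<le> y"
  shows "Qpol p q r (Suc n) x / Qpol p q r n x \<le> Qpol p q r (Suc n) y / Qpol p q r n y"
proof (induction n)
  case 0
  then show ?case using \<open>x \<le> y\<close> p_pos[of 0] by (simp add: divide_right_mono)
next
  case (Suc n)
  define a b c d where "a = Qpol p q r n x" and "b = Qpol p q r (Suc n) x"
    and "c = Qpol p q r n y" and "d = Qpol p q r (Suc n) y"
  have pos: "a > 0" "b > 0" "c > 0" "d > 0"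
    using Qx_pos Qy_pos unfolding a_def b_def c_def d_def by auto
  have "c / d \<le> a / b"
    using Suc.IH pos unfolding a_def b_def c_def d_def by (simp add: divide_simps mult.commute)
  then have "q (Suc n) * (c / d) \<le> q (Suc n) * (a / b)"
    using q_nonneg[of n] by (rule mult_left_mono)
  then have num: "(x - r (Suc n)) - q (Suc n) * (a / b) \<le> (y - r (Suc n)) - q (Suc n) * (c / d)"
    using \<open>x \<le> y\<close> by linarith
  have "Qpol p q r (Suc (Suc n)) x / b = ((x - r (Suc n)) - q (Suc n) * (a / b)) / p (Suc n)"
    "Qpol p q r (Suc (Suc n)) y / d = ((y - r (Suc n)) - q (Suc n) * (c / d)) / p (Suc n)"
    using pos p_pos[of "Suc n"] unfolding a_def b_def c_def d_def by (simp_all add: field_simps)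
  then show ?case
    using num p_pos[of "Suc n"] unfolding b_def d_def by (simp add: divide_right_mono)
qed

lemma Qpol_quotient_antimono:
  fixes p q r :: "nat \<Rightarrow> real"
  assumes p_pos: "\<And>j. p j > 0" and q_nonneg: "\<And>j. q (Suc j) \<ge> 0"
    and Qx_pos: "\<And>n. Qpol p q r n x > 0" and Qy_pos: "\<And>n. Qpol p q r n y > 0"
    and "x \<le> y" and "k \<le> m"
  shows "Qpol p q r k y / Qpol p q r m y \<le> Qpol p q r k x / Qpol p q r m x"
  using \<open>k \<le> m\<close>
proof (induction m rule: dec_induct)
  case base
  then show ?case using Qx_pos[of k] Qy_pos[of k] by simp
next
  case (step m)
  have split: "Qpol p q r k z / Qpol p q r (Suc m) z
      = (Qpol p q r k z / Qpol p q r m z) / (Qpol p q r (Suc m) z / Qpol p q r m z)"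
    if "Qpol p q r m z > 0" for z
    using that by simp
  have ratio: "Qpol p q r (Suc m) x / Qpol p q r m x \<le> Qpol p q r (Suc m) y / Qpol p q r m y"
    using Qpol_ratio_mono[OF p_pos q_nonneg Qx_pos Qy_pos \<open>x \<le> y\<close>] .
  show ?case
    unfolding split[OF Qx_pos] split[OF Qy_pos]
    by (rule frac_le) (use step.IH ratio Qx_pos Qy_pos in \<open>auto intro: divide_nonneg_pos less_imp_le\<close>)
qed

lemma pis_pos:
  assumes "\<And>j. p j > 0" and "\<And>j. q (Suc j) > 0"
  shows "pis p q n > 0"
  unfolding pis_def using assms by (auto intro!: divide_pos_pos prod_pos)

lemma Mfun_term_eq:
  assumes "\<theta> \<noteq> 0" and "Qpol p q r j \<theta> \<noteq> 0" and "Qpol p q r (Suc j) \<theta> \<noteq> 0"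
    and "p j \<noteq> 0" and "pis p q j \<noteq> 0"
  shows "1 / (ptheta p q r j \<theta> * pitheta p q r j \<theta>) * (rtheta r k \<theta> * pitheta p q r k \<theta>)
    = r k * pis p q k / (p j * pis p q j) * (Qpol p q r k \<theta> / Qpol p q r j \<theta>)\<^sup>2
        * (Qpol p q r j \<theta> / Qpol p q r (Suc j) \<theta>)"
  using assms unfolding ptheta_def pitheta_def rtheta_def
  by (simp add: field_simps power2_eq_square)

lemma Mfun_antimono:
  fixes p q r :: "nat \<Rightarrow> real"
  assumes p_pos: "\<And>j. p j > 0" and q_pos: "\<And>j. q (Suc j) > 0" and r_nonneg: "\<And>j. r j \<ge> 0"
    and Q1_pos: "\<And>n. Qpol p q r n \<theta>1 > 0" and Q2_pos: "\<And>n. Qpol p q r n \<theta>2 > 0"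
    and "0 < \<theta>1" and "\<theta>1 \<le> \<theta>2"
  shows "Mfun p q r n \<theta>2 \<le> Mfun p q r n \<theta>1"
proof -
  define c where "c j k = r k * pis p q k / (p j * pis p q j)" for j k
  have c_nonneg: "c j k \<ge> 0" for j k
    unfolding c_def using r_nonneg[of k] pis_pos[of p q, OF p_pos q_pos] p_pos[of j]
    by (simp add: divide_nonneg_pos less_imp_le)
  have Mfun_eq: "Mfun p q r n \<theta> = (\<Sum>j\<le>n. \<Sum>k\<le>j. c j k * (Qpol p q r k \<theta> / Qpol p q r j \<theta>)\<^sup>2
        * (Qpol p q r j \<theta> / Qpol p q r (Suc j) \<theta>))"
    if "\<theta> > 0" and "\<And>n. Qpol p q r n \<theta> > 0" for \<theta>
    unfolding Mfun_def sum_distrib_left c_def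
    by (intro sum.cong refl Mfun_term_eq)
      (use that p_pos pis_pos[of p q, OF p_pos q_pos] in \<open>metis less_irrefl\<close>)+
  have q_nonneg: "q (Suc j) \<ge> 0" for j
    using q_pos[of j] by simp
  have "0 < \<theta>2" using \<open>0 < \<theta>1\<close> \<open>\<theta>1 \<le> \<theta>2\<close> by linarith
  note quot = Qpol_quotient_antimono[OF p_pos q_nonneg Q1_pos Q2_pos \<open>\<theta>1 \<le> \<theta>2\<close>]
  show ?thesis
    unfolding Mfun_eq[OF \<open>0 < \<theta>1\<close> Q1_pos] Mfun_eq[OF \<open>0 < \<theta>2\<close> Q2_pos]
  proof (intro sum_mono mult_mono mult_left_mono power_mono c_nonneg quot)
    fix j k assume "k \<in> {..j}"
    then show "k \<le> j" by simp
  qed (use Q2_pos c_nonneg in \<open>auto intro: divide_nonneg_pos less_imp_le\<close>)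
qed

theorem lemma3:
  fixes p q r :: "nat \<Rightarrow> real" and psi :: "real measure" and \<eta> \<theta>1 \<theta>2 :: real
  assumes p_pos: "\<And>j. p j > 0"
    and q_pos: "\<And>j. q (Suc j) > 0"
    and r_nonneg: "\<And>j. r j \<ge> 0"
    and q0: "q 0 = 0"
    and sum1: "\<And>j. p j + q j + r j = 1"
    and psi_prob: "prob_space psi"
    and psi_borel: "sets psi = sets borel"
    and psi_on: "measure psi {-1..1} = 1"
    and psi_supp: "msupport psi \<subseteq> {-1..1}"
    and psi_inf: "infinite (msupport psi)"
    and psi_orth: "\<And>m n. m \<noteq> n \<Longrightarrow>
                      integral\<^sup>L psi (\<lambda>x. Qpol p q r m x * Qpol p q r n x) = 0"
    and eta_def: "\<eta> = Sup (msupport psi)"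
    and eta_pos: "\<eta> > 0"
    and Q_pos: "\<And>n x. x \<ge> \<eta> \<Longrightarrow> Qpol p q r n x > 0"
    and th1: "\<eta> \<le> \<theta>1" and th12: "\<theta>1 \<le> \<theta>2"
  shows "\<forall>n. Mfun p q r n \<theta>1 \<ge> Mfun p q r n \<theta>2"
proof
  fix n
  have "0 < \<theta>1" using eta_pos th1 by linarith
  moreover have "Qpol p q r m \<theta>1 > 0" "Qpol p q r m \<theta>2 > 0" for m
    using Q_pos th1 th12 by auto
  ultimately show "Mfun p q r n \<theta>1 \<ge> Mfun p q r n \<theta>2"
    by (intro Mfun_antimono p_pos q_pos r_nonneg th12)
qed

end
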